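(* Let $G(n,n_1,n_2,n_3,p_1,p_2,p_3)$ be a three-layer stochastic block model network satisfying the standing assumptions below. Fix any one of the three layers as target layer, and apply RemoveEdge to all communities of the other two layers. Then the (expected) modularity of the target layer's partition in the resulting graph is strictly larger than in the original graph.
   Context: Multi-layer stochastic block model $G(n,n_1,\dots,n_L,p_1,\dots,p_L)$: a random graph on $n$ nodes with $L$ layers. For each layer $l$ the nodes are partitioned into $n_l$ planted communities of size $s_l=n/n_l$; independently for each layer, each pair of distinct nodes in a common community of layer $l$ receives an edge from layer $l$ with probability $p_l$; the graph is the simple union of all generated edges, so a pair lying in a common community of exactly the layers in a set $T$ is an edge with probability $1-\prod_{l\in T}(1-p_l)$. The partitions of different layers are independent: for any $k\ge2$ distinct layers and one community from each, their intersection has $n/(n_{l_1}\cdots n_{l_k})$ nodes (in expectation). Standing assumptions: $n_l\ge4$, $p_l\in[0.05,1]$ for every layer, and $n\ge2\prod_l n_l$. RemoveEdge applied to the communities of a layer $l$ deletes every edge whose two endpoints lie in a common community of layer $l$. Modularity of a layer $l$: for a graph with $e$ edges, if community $i$ of $l$ has $e^i_{ll}$ internal edges, $e^i_{lout}$ edges with exactly one endpoint in it, and $d^i_l=2e^i_{ll}+e^i_{lout}$, then $Q_l=\sum_i\big(\frac{e^i_{ll}}{e}-(\frac{d^i_l}{2e})^2\big)$; in the model all edge counts are replaced by their expected values (all communities of a layer having the same expected counts). *)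

theory Defs
  imports Complex_Main
begin

text \<open>Layers are indexed by a finite set Ls of naturals; nc l is the number n_l of
  communities of layer l, p l the edge probability p_l, n the number of nodes.
  R is the set of layers to whose communities RemoveEdge has been applied
  (R = {} is the original graph).\<close>

text \<open>Expected number of unordered pairs of distinct nodes lying in a common community of
  every layer of S: each node's intersection of communities has n / prod n_l nodes.\<close>
definition pairs_atleast :: "nat \<Rightarrow> (nat \<Rightarrow> nat) \<Rightarrow> nat set \<Rightarrow> real" where
  "pairs_atleast n nc S = real n * (real n / (\<Prod>l\<in>S. real (nc l)) - 1) / 2"

text \<open>Expected number of unordered pairs lying in a common community of exactly the
  layers in T (inclusion-exclusion).\<close>
definition pairs_exact :: "nat set \<Rightarrow> nat \<Rightarrow> (nat \<Rightarrow> nat) \<Rightarrow> nat set \<Rightarrow> real" where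
  "pairs_exact Ls n nc T =
     (\<Sum>S\<in>{S. T \<subseteq> S \<and> S \<subseteq> Ls}. (-1) ^ card (S - T) * pairs_atleast n nc S)"

text \<open>Probability that a pair of type T is an edge after RemoveEdge on the layers in R.\<close>
definition edge_prob :: "(nat \<Rightarrow> real) \<Rightarrow> nat set \<Rightarrow> nat set \<Rightarrow> real" where
  "edge_prob p R T = (if T \<inter> R = {} then 1 - (\<Prod>l\<in>T. 1 - p l) else 0)"

definition exp_edges_of_types ::
  "nat set \<Rightarrow> nat \<Rightarrow> (nat \<Rightarrow> nat) \<Rightarrow> (nat \<Rightarrow> real) \<Rightarrow> nat set \<Rightarrow> nat set set \<Rightarrow> real" where
  "exp_edges_of_types Ls n nc p R Ts = (\<Sum>T\<in>Ts. pairs_exact Ls n nc T * edge_prob p R T)"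

definition exp_edges :: "nat set \<Rightarrow> nat \<Rightarrow> (nat \<Rightarrow> nat) \<Rightarrow> (nat \<Rightarrow> real) \<Rightarrow> nat set \<Rightarrow> real" where
  "exp_edges Ls n nc p R = exp_edges_of_types Ls n nc p R (Pow Ls)"

text \<open>Expected number e_ll of internal edges of one community of layer l
  (all n_l communities having the same expected counts).\<close>
definition exp_internal ::
  "nat set \<Rightarrow> nat \<Rightarrow> (nat \<Rightarrow> nat) \<Rightarrow> (nat \<Rightarrow> real) \<Rightarrow> nat set \<Rightarrow> nat \<Rightarrow> real" where
  "exp_internal Ls n nc p R l =
     exp_edges_of_types Ls n nc p R {T \<in> Pow Ls. l \<in> T} / real (nc l)"

text \<open>Expected number e_lout of edges with exactly one endpoint in one community of layer l
  (each edge between two different communities of l touches two communities).\<close>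
definition exp_out ::
  "nat set \<Rightarrow> nat \<Rightarrow> (nat \<Rightarrow> nat) \<Rightarrow> (nat \<Rightarrow> real) \<Rightarrow> nat set \<Rightarrow> nat \<Rightarrow> real" where
  "exp_out Ls n nc p R l =
     2 * exp_edges_of_types Ls n nc p R {T \<in> Pow Ls. l \<notin> T} / real (nc l)"

definition exp_degree ::
  "nat set \<Rightarrow> nat \<Rightarrow> (nat \<Rightarrow> nat) \<Rightarrow> (nat \<Rightarrow> real) \<Rightarrow> nat set \<Rightarrow> nat \<Rightarrow> real" where
  "exp_degree Ls n nc p R l = 2 * exp_internal Ls n nc p R l + exp_out Ls n nc p R l"

definition modularity ::
  "nat set \<Rightarrow> nat \<Rightarrow> (nat \<Rightarrow> nat) \<Rightarrow> (nat \<Rightarrow> real) \<Rightarrow> nat set \<Rightarrow> nat \<Rightarrow> real" where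
  "modularity Ls n nc p R l =
     (let e = exp_edges Ls n nc p R in
      \<Sum>i<nc l. exp_internal Ls n nc p R l / e - (exp_degree Ls n nc p R l / (2 * e))^2)"

end

theory Submission
  imports Defs
begin

text \<open>Since all communities of a layer have the same expected counts, the modularity of layer t
  collapses to I / e - 1 / n_t, where e is the expected number of edges and I the expected number
  of edges whose endpoints share a community of t. After RemoveEdge on all other layers only pairs
  sharing a community of t alone keep their edges, so I = e and the modularity is 1 - 1 / n_t.
  In the original graph the pairs sharing a community of another layer s only contribute edges
  outside the communities of t, so I < e. Positivity of these pair counts follows from the
  inclusion-exclusion closed form  n^2 / (2 prod_{l in T} n_l) * prod_{l notin T} (1 - 1 / n_l)
  of the number of pairs of a type T other than the set of all layers.\<close>

lemma sum_Pow_alternating: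
  assumes "finite A"
  shows "(\<Sum>U\<in>Pow A. (-1) ^ card U :: 'a :: comm_ring_1) = (if A = {} then 1 else 0)"
  using prod_diff_conv_sum[OF assms, of "\<lambda>_. 1" "\<lambda>_. 1 :: 'a"] assms
  by (simp add: card_eq_0_iff power_0_left)

lemma sum_Pow_alternating_prod:
  assumes "finite A"
  shows "(\<Sum>U\<in>Pow A. (-1) ^ card U * (\<Prod>x\<in>U. f x)) = (\<Prod>x\<in>A. 1 - f x :: 'a :: comm_ring_1)"
  using prod_diff_conv_sum[OF assms, of "\<lambda>_. 1" f] by simp

lemma pairs_exact_eq_sum_Pow:
  assumes "T \<subseteq> Ls"
  shows "pairs_exact Ls n nc T = (\<Sum>U\<in>Pow (Ls - T). (-1) ^ card U * pairs_atleast n nc (T \<union> U))"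
  unfolding pairs_exact_def
  by (rule sum.reindex_bij_witness[where i="\<lambda>U. T \<union> U" and j="\<lambda>S. S - T"])
    (use assms in \<open>auto simp: Un_absorb1\<close>)

lemma pairs_atleast_disjoint_Un:
  assumes "finite T" "finite U" "T \<inter> U = {}"
  shows "pairs_atleast n nc (T \<union> U) =
    real n / 2 * (real n / (\<Prod>l\<in>T. real (nc l)) * (\<Prod>l\<in>U. 1 / real (nc l)) - 1)"
  using assms by (simp add: pairs_atleast_def prod.union_disjoint prod_dividef field_simps)

lemma pairs_exact_closed_form:
  assumes "finite Ls" "T \<subseteq> Ls"
  shows "pairs_exact Ls n nc T = real n / 2 *
    (real n / (\<Prod>l\<in>T. real (nc l)) * (\<Prod>l\<in>Ls - T. 1 - 1 / real (nc l)) - (if T = Ls then 1 else 0))"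
proof -
  have fin: "finite T" "finite (Ls - T)" using assms finite_subset by auto
  define a where "a = real n / 2"
  define b where "b = real n / (\<Prod>l\<in>T. real (nc l))"
  have "pairs_exact Ls n nc T = (\<Sum>U\<in>Pow (Ls - T).
      a * (b * ((-1) ^ card U * (\<Prod>l\<in>U. 1 / real (nc l))) - (-1) ^ card U))"
    unfolding pairs_exact_eq_sum_Pow[OF assms(2)]
  proof (rule sum.cong)
    fix U assume "U \<in> Pow (Ls - T)"
    then have "finite U" "T \<inter> U = {}" using fin finite_subset by auto
    then show "(-1) ^ card U * pairs_atleast n nc (T \<union> U) =
      a * (b * ((-1) ^ card U * (\<Prod>l\<in>U. 1 / real (nc l))) - (-1) ^ card U)"
      using fin by (simp add: pairs_atleast_disjoint_Un a_def b_def algebra_simps)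
  qed simp
  also have "\<dots> = a * (b * (\<Sum>U\<in>Pow (Ls - T). (-1) ^ card U * (\<Prod>l\<in>U. 1 / real (nc l)))
      - (\<Sum>U\<in>Pow (Ls - T). (-1) ^ card U))"
    by (simp add: sum_subtractf right_diff_distrib flip: sum_distrib_left)
  finally show ?thesis
    using assms by (simp add: sum_Pow_alternating sum_Pow_alternating_prod fin a_def b_def)
qed

lemma pairs_exact_nonneg:
  assumes "finite Ls" "T \<subseteq> Ls" "\<forall>l\<in>Ls. 0 < nc l" "(\<Prod>l\<in>Ls. nc l) \<le> n"
  shows "0 \<le> pairs_exact Ls n nc T"
proof (cases "T = Ls")
  case True
  have "0 < (\<Prod>l\<in>Ls. real (nc l))" using assms(3) by (simp add: prod_pos)
  moreover have "(\<Prod>l\<in>Ls. real (nc l)) \<le> real n"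
    using assms(4) by (metis of_nat_le_iff of_nat_prod)
  ultimately have "1 \<le> real n / (\<Prod>l\<in>Ls. real (nc l))" by simp
  then show ?thesis using True assms(1) by (simp add: pairs_exact_closed_form)
next
  case False
  have "0 \<le> (\<Prod>l\<in>Ls - T. 1 - 1 / real (nc l))"
    using assms(3) by (intro prod_nonneg) (auto simp: field_simps Suc_le_eq)
  then show ?thesis
    using False assms(1,2) by (simp add: pairs_exact_closed_form prod_nonneg)
qed

lemma pairs_exact_pos:
  assumes "finite Ls" "T \<subset> Ls" "\<forall>l\<in>Ls. 2 \<le> nc l" "0 < n"
  shows "0 < pairs_exact Ls n nc T"
proof -
  have "0 < (\<Prod>l\<in>Ls - T. 1 - 1 / real (nc l))"
    using assms(3) by (intro prod_pos) (auto simp: field_simps)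
  moreover have "0 < (\<Prod>l\<in>T. real (nc l))"
    using assms(2,3) by (intro prod_pos) force
  ultimately show ?thesis
    using assms by (simp add: pairs_exact_closed_form)
qed

lemma edge_prob_singleton: "l \<notin> R \<Longrightarrow> edge_prob p R {l} = p l"
  by (simp add: edge_prob_def)

lemma edge_prob_nonneg: "\<forall>l\<in>T. 0 \<le> p l \<and> p l \<le> 1 \<Longrightarrow> 0 \<le> edge_prob p R T"
  by (simp add: edge_prob_def prod_le_1)

lemma pairs_exact_mult_edge_prob_nonneg:
  assumes "finite Ls" "T \<subseteq> Ls" "\<forall>l\<in>Ls. 0 < nc l" "(\<Prod>l\<in>Ls. nc l) \<le> n"
    and "\<forall>l\<in>Ls. 0 \<le> p l \<and> p l \<le> 1"
  shows "0 \<le> pairs_exact Ls n nc T * edge_prob p R T"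
  using assms by (intro mult_nonneg_nonneg pairs_exact_nonneg edge_prob_nonneg) auto

lemma exp_edges_split:
  assumes "finite Ls"
  shows "exp_edges Ls n nc p R = exp_edges_of_types Ls n nc p R {T \<in> Pow Ls. t \<in> T}
    + exp_edges_of_types Ls n nc p R {T \<in> Pow Ls. t \<notin> T}"
proof -
  have "Pow Ls = {T \<in> Pow Ls. t \<in> T} \<union> {T \<in> Pow Ls. t \<notin> T}" by auto
  then show ?thesis
    using assms unfolding exp_edges_def exp_edges_of_types_def
    by (metis (no_types, lifting) sum.union_disjoint disjoint_iff finite_Pow_iff finite_Un mem_Collect_eq)
qed

lemma exp_edges_of_types_remove_other_layers:
  assumes "finite Ls" "t \<in> Ls" "Ts \<subseteq> Pow Ls"
  shows "exp_edges_of_types Ls n nc p (Ls - {t}) Ts =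
    (if {t} \<in> Ts then pairs_exact Ls n nc {t} * p t else 0)"
proof -
  have "edge_prob p (Ls - {t}) T = (if T = {t} then p t else 0)" if "T \<in> Ts" for T
  proof -
    have "T = {} \<or> T = {t} \<or> T \<inter> (Ls - {t}) \<noteq> {}" using that assms(3) by auto
    then show ?thesis by (auto simp: edge_prob_def)
  qed
  then have "exp_edges_of_types Ls n nc p (Ls - {t}) Ts =
      (\<Sum>T\<in>Ts. if T = {t} then pairs_exact Ls n nc {t} * p t else 0)"
    unfolding exp_edges_of_types_def by (intro sum.cong) auto
  also have "\<dots> = (if {t} \<in> Ts then pairs_exact Ls n nc {t} * p t else 0)"
    using assms by (simp add: finite_subset)
  finally show ?thesis .
qed

lemma modularity_eq:
  assumes "finite Ls" "0 < nc t" "exp_edges Ls n nc p R \<noteq> 0"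
  shows "modularity Ls n nc p R t =
    exp_edges_of_types Ls n nc p R {T \<in> Pow Ls. t \<in> T} / exp_edges Ls n nc p R - 1 / real (nc t)"
proof -
  define e where "e = exp_edges Ls n nc p R"
  define a where "a = real (nc t)"
  have a: "a \<noteq> 0" and e: "e \<noteq> 0" using assms by (simp_all add: a_def e_def)
  have "exp_degree Ls n nc p R t = 2 * e / a"
    unfolding exp_degree_def exp_internal_def exp_out_def e_def a_def
      exp_edges_split[OF assms(1), of n nc p R t] by (simp add: add_divide_distrib)
  then have "modularity Ls n nc p R t = a * (exp_internal Ls n nc p R t / e - (1 / a)\<^sup>2)"
    using e by (simp add: modularity_def a_def e_def)
  also have "\<dots> = exp_edges_of_types Ls n nc p R {T \<in> Pow Ls. t \<in> T} / e - 1 / a"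
    using a by (simp add: exp_internal_def a_def power2_eq_square right_diff_distrib)
  finally show ?thesis by (simp add: a_def e_def)
qed

lemma modularity_remove_other_layers:
  assumes "finite Ls" "t \<in> Ls" "0 < nc t" "pairs_exact Ls n nc {t} * p t \<noteq> 0"
  shows "modularity Ls n nc p (Ls - {t}) t = 1 - 1 / real (nc t)"
proof -
  have single: "exp_edges_of_types Ls n nc p (Ls - {t}) Ts = pairs_exact Ls n nc {t} * p t"
    if "Ts \<subseteq> Pow Ls" "{t} \<in> Ts" for Ts
    using exp_edges_of_types_remove_other_layers[OF assms(1,2) that(1)] that(2) by simp
  have "exp_edges Ls n nc p (Ls - {t}) = pairs_exact Ls n nc {t} * p t"
    unfolding exp_edges_def using assms(2) by (intro single) auto
  moreover have "exp_edges_of_types Ls n nc p (Ls - {t}) {T \<in> Pow Ls. t \<in> T} =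
      pairs_exact Ls n nc {t} * p t"
    using assms(2) by (intro single) auto
  ultimately show ?thesis using assms by (simp add: modularity_eq)
qed

lemma modularity_less_if_external_edges:
  assumes "finite Ls" "0 < nc t"
    and "0 \<le> exp_edges_of_types Ls n nc p R {T \<in> Pow Ls. t \<in> T}"
    and "0 < exp_edges_of_types Ls n nc p R {T \<in> Pow Ls. t \<notin> T}"
  shows "modularity Ls n nc p R t < 1 - 1 / real (nc t)"
  using assms by (simp add: modularity_eq exp_edges_split[OF assms(1), of n nc p R t])

theorem modularity_increases_by_removing_other_layers:
  assumes "finite Ls" "t \<in> Ls" "s \<in> Ls" "s \<noteq> t"
    and "\<forall>l\<in>Ls. 2 \<le> nc l" "\<forall>l\<in>Ls. 0 < p l \<and> p l \<le> 1" "(\<Prod>l\<in>Ls. nc l) \<le> n"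
  shows "modularity Ls n nc p {} t < modularity Ls n nc p (Ls - {t}) t"
proof -
  have nc_pos: "\<forall>l\<in>Ls. 0 < nc l" and p_prob: "\<forall>l\<in>Ls. 0 \<le> p l \<and> p l \<le> 1"
    using assms(5,6) by force+
  have "0 < n" using assms(7) nc_pos by (metis le_zero_eq not_gr_zero prod_pos)
  then have pairs_pos: "0 < pairs_exact Ls n nc {l}" if "l \<in> Ls" for l
    using that assms(1-5) by (intro pairs_exact_pos) auto
  have term_nonneg: "0 \<le> pairs_exact Ls n nc T * edge_prob p {} T" if "T \<in> Pow Ls" for T
    using that assms(1,7) nc_pos p_prob by (intro pairs_exact_mult_edge_prob_nonneg) auto
  have "0 < pairs_exact Ls n nc {s} * edge_prob p {} {s}"
    using pairs_pos[OF assms(3)] assms(3,6) by (simp add: edge_prob_singleton)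
  also have "\<dots> \<le> exp_edges_of_types Ls n nc p {} {T \<in> Pow Ls. t \<notin> T}"
    unfolding exp_edges_of_types_def using assms(1,3,4) term_nonneg by (intro member_le_sum) auto
  finally have "modularity Ls n nc p {} t < 1 - 1 / real (nc t)"
    using assms(1,2) nc_pos term_nonneg
    by (intro modularity_less_if_external_edges) (auto simp: exp_edges_of_types_def intro: sum_nonneg)
  also have "\<dots> = modularity Ls n nc p (Ls - {t}) t"
    using pairs_pos[OF assms(2)] assms(1,2,6) nc_pos by (intro modularity_remove_other_layers[symmetric]) auto
  finally show ?thesis .
qed

theorem theorem13:
  fixes n :: nat and nc :: "nat \<Rightarrow> nat" and p :: "nat \<Rightarrow> real" and t :: nat
  assumes "t \<in> {0, 1, 2}"
    and "\<forall>l\<in>{0::nat, 1, 2}. 4 \<le> nc l"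
    and "\<forall>l\<in>{0::nat, 1, 2}. 0.05 \<le> p l \<and> p l \<le> 1"
    and "2 * (\<Prod>l\<in>{0::nat, 1, 2}. nc l) \<le> n"
  shows "modularity {0, 1, 2} n nc p ({0, 1, 2} - {t}) t > modularity {0, 1, 2} n nc p {} t"
proof (rule modularity_increases_by_removing_other_layers)
  show "(if t = 0 then 1 else 0) \<in> {0::nat, 1, 2}" "(if t = 0 then 1 else 0) \<noteq> t" by auto
  show "\<forall>l\<in>{0::nat, 1, 2}. 2 \<le> nc l" "\<forall>l\<in>{0::nat, 1, 2}. 0 < p l \<and> p l \<le> 1"
    using assms(2,3) by force+
  show "(\<Prod>l\<in>{0::nat, 1, 2}. nc l) \<le> n" using assms(4) by linarith
qed (use assms(1) in auto)

end
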